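(* There is an open set $U\subseteq2^\omega$ with $\Phi(U)=U$ such that its frontier $\mathrm{Fr}\,U=\mathrm{Cl}\,U\setminus\mathrm{Int}\,U$ has positive measure.
   Context: $2^\omega$ is the Cantor space; $N_s=\{x:s\subset x\}$; $\mu$ the coin-tossing measure with $\mu(N_s)=2^{-\mathrm{lh}(s)}$. For measurable $A$, $\Phi(A)=\{x:\lim_n\mu(A\cap N_{x\restriction n})/\mu(N_{x\restriction n})=1\}$. *)

theory Defs
  imports "HOL-Probability.Probability"
begin

text \<open>Cantor space is the type nat => bool with its product topology
  (library instance). The coin-tossing measure is the infinite product of fair
  Bernoulli measures.\<close>

definition cantor_mu :: "(nat \<Rightarrow> bool) measure" where
  "cantor_mu = PiM UNIV (\<lambda>_. measure_pmf (bernoulli_pmf (1/2)))"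

definition cyl :: "bool list \<Rightarrow> (nat \<Rightarrow> bool) set" where
  "cyl s = {x. \<forall>i < length s. x i = s ! i}"

definition restr :: "(nat \<Rightarrow> bool) \<Rightarrow> nat \<Rightarrow> bool list" where
  "restr x n = map x [0..<n]"

definition Phi :: "(nat \<Rightarrow> bool) set \<Rightarrow> (nat \<Rightarrow> bool) set" where
  "Phi A = {x. (\<lambda>n. measure cantor_mu (A \<inter> cyl (restr x n)) / measure cantor_mu (cyl (restr x n)))
                 \<longlonglongrightarrow> 1}"

end

theory Submission imports Defs begin

(* The witness is U = \<Union>j. Z_j, where the coordinates are cut into consecutive
   blocks B_j = [j^2, (j+1)^2) of length 2j+1 and Z_j is the set of sequences
   vanishing on B_j.
   - U is open, since each Z_j only constrains finitely many coordinates, and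
     dense, since every prefix can be extended into some Z_j with j large;
     hence Fr U is the complement of U.
   - \<mu>(U) \<le> \<Sum>j 2^-(2j+1) = 2/3, so \<mu>(Fr U) \<ge> 1/3 > 0.
   - \<Phi>(U) = U: a point of Z_j has all its long enough neighbourhoods N_{x|n}
     inside Z_j; for a point x outside U and n = (k+1)^2 the neighbourhood N_{x|n}
     misses Z_0,...,Z_k, and meets each later Z_j in relative measure 2^-(2j+1),
     so the density of U along these n stays \<le> 2/3.
   The file first computes the measure and topology of sets that fix finitely
   many coordinates, then proves general criteria for (non-)membership in \<Phi>
   and for density, and finally verifies them for the block construction. *)

abbreviation fair_coin :: "bool measure" where
  "fair_coin \<equiv> measure_pmf (bernoulli_pmf (1/2))"

definition agree_on :: "nat set \<Rightarrow> (nat \<Rightarrow> bool) \<Rightarrow> (nat \<Rightarrow> bool) set" where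
  "agree_on I v = {x. \<forall>i\<in>I. x i = v i}"

lemma prob_space_cantor_mu: "prob_space cantor_mu"
  unfolding cantor_mu_def by (intro prob_space_PiM) (simp add: prob_space_measure_pmf)

lemma finite_measure_cantor_mu: "finite_measure cantor_mu"
  using prob_space_cantor_mu by (simp add: prob_space_def)

lemma space_cantor_mu: "space cantor_mu = UNIV"
  unfolding cantor_mu_def by (simp add: space_PiM)

lemma agree_on_prod_emb:
  "agree_on I v = prod_emb UNIV (\<lambda>_. fair_coin) I (Pi\<^sub>E I (\<lambda>i. {v i}))"
  unfolding agree_on_def prod_emb_def by (rule set_eqI) (simp add: PiE_iff)

lemma sets_agree_on: "finite I \<Longrightarrow> agree_on I v \<in> sets cantor_mu"
  unfolding agree_on_prod_emb cantor_mu_def by (rule sets_PiM_I) auto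

lemma measure_agree_on:
  assumes "finite I"
  shows "measure cantor_mu (agree_on I v) = (1/2) ^ card I"
proof -
  have "emeasure cantor_mu (agree_on I v) = (\<Prod>i\<in>I. emeasure fair_coin {v i})"
    unfolding agree_on_prod_emb cantor_mu_def
    by (rule emeasure_PiM_emb) (auto simp: assms prob_space_measure_pmf)
  also have "\<dots> = (\<Prod>i\<in>I. ennreal (1/2))"
  proof (rule prod.cong)
    show "emeasure fair_coin {v i} = ennreal (1/2)" for i
      by (cases "v i") (simp_all add: emeasure_pmf_single)
  qed simp
  also have "\<dots> = ennreal (\<Prod>i\<in>I. 1/2)"
    by (subst prod_ennreal) auto
  also have "\<dots> = ennreal ((1/2) ^ card I)"
    by simp
  finally show ?thesis unfolding measure_def by simp
qed

lemma open_agree_on: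
  assumes "finite I"
  shows "open (agree_on I v)"
proof -
  have "open {f::nat\<Rightarrow>bool. \<forall>i\<in>I. f ((\<lambda>i. i) i) \<in> {v i}}"
    by (rule product_topology_basis') (simp_all add: assms discrete_topology_class.open_discrete)
  then show ?thesis by (simp add: agree_on_def)
qed

lemma agree_on_Un:
  "I \<inter> J = {} \<Longrightarrow> agree_on I v \<inter> agree_on J w = agree_on (I \<union> J) (\<lambda>i. if i \<in> I then v i else w i)"
  by (auto simp: agree_on_def)

lemma cyl_restr: "cyl (restr x n) = agree_on {..<n} x"
  by (auto simp: cyl_def restr_def agree_on_def)

lemma measure_cyl_restr: "measure cantor_mu (cyl (restr x n)) = (1/2) ^ n"
  by (simp add: cyl_restr measure_agree_on)

lemma measure_UN_le_suminf:
  assumes "finite_measure M" "\<And>j. C j \<in> sets M" "\<And>j. measure M (C j) \<le> b j" "summable b"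
  shows "measure M (\<Union>j. C j) \<le> (\<Sum>j. b j)"
proof -
  interpret finite_measure M by fact
  have summable_C: "summable (\<lambda>j. measure M (C j))"
    by (rule summable_comparison_test'[where N=0, OF assms(4)]) (simp add: assms(3))
  have "measure M (\<Union>j. C j) \<le> (\<Sum>j. measure M (C j))"
    by (rule finite_measure_subadditive_countably) (use assms(2) summable_C in auto)
  also have "\<dots> \<le> (\<Sum>j. b j)"
    using assms(3,4) summable_C by (intro suminf_le) auto
  finally show ?thesis .
qed

lemma in_Phi_if_cyl_subset:
  assumes "eventually (\<lambda>n. cyl (restr x n) \<subseteq> A) sequentially"
  shows "x \<in> Phi A"
proof -
  have "eventually (\<lambda>n. measure cantor_mu (A \<inter> cyl (restr x n))
          / measure cantor_mu (cyl (restr x n)) = 1) sequentially"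
    using assms by eventually_elim (simp add: Int_absorb1 measure_cyl_restr)
  then show ?thesis unfolding Phi_def by (auto intro: tendsto_eventually)
qed

lemma not_in_Phi_if_frequently_le:
  assumes "c < 1"
    and "\<And>N. \<exists>n\<ge>N. measure cantor_mu (A \<inter> cyl (restr x n)) / measure cantor_mu (cyl (restr x n)) \<le> c"
  shows "x \<notin> Phi A"
proof
  assume "x \<in> Phi A"
  then have "(\<lambda>n. measure cantor_mu (A \<inter> cyl (restr x n)) / measure cantor_mu (cyl (restr x n)))
      \<longlonglongrightarrow> 1" unfolding Phi_def by simp
  then have "eventually (\<lambda>n. c < measure cantor_mu (A \<inter> cyl (restr x n))
      / measure cantor_mu (cyl (restr x n))) sequentially"
    using \<open>c < 1\<close> by (rule order_tendstoD(1))
  then obtain N where "\<And>n. n \<ge> N \<Longrightarrow> c < measure cantor_mu (A \<inter> cyl (restr x n))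
      / measure cantor_mu (cyl (restr x n))"
    unfolding eventually_sequentially by blast
  with assms(2)[of N] show False by force
qed

lemma closure_eq_UNIV_if_extends_prefixes:
  assumes "\<And>x N. \<exists>y\<in>U. \<forall>i<N. y i = x i"
  shows "closure U = (UNIV :: (nat \<Rightarrow> bool) set)"
proof -
  have "x \<in> closure U" for x
    unfolding closure_iff_nhds_not_empty
  proof (intro allI impI)
    fix A S assume "S \<subseteq> A" "open S" "x \<in> S"
    from \<open>open S\<close> have "openin (product_topology (\<lambda>i. euclidean) UNIV) S"
      by (simp only: open_fun_def)
    from this[unfolded openin_product_topology_alt, rule_format, OF \<open>x \<in> S\<close>]
    obtain V where V: "finite {i. V i \<noteq> UNIV}" "x \<in> Pi\<^sub>E UNIV V" "Pi\<^sub>E UNIV V \<subseteq> S"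
      by auto
    obtain N where N: "{i. V i \<noteq> UNIV} \<subseteq> {..<N}"
      using finite_nat_bounded[OF V(1)] by auto
    obtain y where "y \<in> U" and y: "\<forall>i<N. y i = x i"
      using assms by blast
    have "y i \<in> V i" for i
      using N V(2) y by (cases "i < N") (auto simp: PiE_iff)
    then have "y \<in> S" using V(3) by (auto simp: PiE_iff)
    then show "U \<inter> A \<noteq> {}" using \<open>y \<in> U\<close> \<open>S \<subseteq> A\<close> by blast
  qed
  then show ?thesis by auto
qed

definition block :: "nat \<Rightarrow> nat set" where
  "block j = {j^2..<(Suc j)^2}"

lemma finite_block: "finite (block j)"
  by (simp add: block_def)

lemma card_block: "card (block j) = 2 * j + 1"
  by (simp add: block_def power2_eq_square)

lemma block_below:
  assumes "j \<le> k" "i \<in> block j"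
  shows "i < (Suc k)^2"
proof -
  have "(Suc j)^2 \<le> (Suc k)^2" using assms(1) by (intro power_mono) auto
  moreover have "i < (Suc j)^2" using assms(2) by (simp add: block_def)
  ultimately show ?thesis by linarith
qed

lemma block_above:
  assumes "k < j" "i \<in> block j"
  shows "(Suc k)^2 \<le> i"
proof -
  have "(Suc k)^2 \<le> j^2" using assms(1) by (intro power_mono) auto
  moreover have "j^2 \<le> i" using assms(2) by (simp add: block_def)
  ultimately show ?thesis by linarith
qed

lemma block_ge_index: "i \<in> block j \<Longrightarrow> j \<le> i"
  using power_mono[of 1 j 2] by (cases j) (auto simp: block_def power2_eq_square)

definition zero_block :: "nat \<Rightarrow> (nat \<Rightarrow> bool) set" where
  "zero_block j = agree_on (block j) (\<lambda>_. False)"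

definition U_blocks :: "(nat \<Rightarrow> bool) set" where
  "U_blocks = (\<Union>j. zero_block j)"

lemma sets_zero_block: "zero_block j \<in> sets cantor_mu"
  by (simp add: zero_block_def sets_agree_on finite_block)

lemma sets_U_blocks: "U_blocks \<in> sets cantor_mu"
  using sets_zero_block by (auto simp: U_blocks_def)

lemma geometric_blocks:
  "summable (\<lambda>j. (1/2::real) ^ (2*j+1))" "(\<Sum>j. (1/2::real) ^ (2*j+1)) = 2/3"
proof -
  have eq: "(\<lambda>j. (1/2::real) ^ (2*j+1)) = (\<lambda>j. 1/2 * (1/4) ^ j)"
    by (auto simp: power_mult power_add power2_eq_square)
  show "summable (\<lambda>j. (1/2::real) ^ (2*j+1))"
    unfolding eq by (intro summable_mult summable_geometric) simp
  show "(\<Sum>j. (1/2::real) ^ (2*j+1)) = 2/3"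
    unfolding eq by (subst suminf_mult) (auto intro: summable_geometric simp: suminf_geometric)
qed

lemma open_U_blocks: "open U_blocks"
  by (auto simp: U_blocks_def zero_block_def intro!: open_agree_on finite_block)

text \<open>U is dense: changing a sequence on a block far beyond a given prefix lands in U.\<close>
lemma closure_U_blocks: "closure U_blocks = UNIV"
proof (rule closure_eq_UNIV_if_extends_prefixes)
  fix x :: "nat \<Rightarrow> bool" and N
  define y where "y i = (i \<notin> block N \<and> x i)" for i
  have "y \<in> zero_block N" by (simp add: y_def zero_block_def agree_on_def)
  moreover have "\<forall>i<N. y i = x i" using block_ge_index by (fastforce simp: y_def)
  ultimately show "\<exists>y\<in>U_blocks. \<forall>i<N. y i = x i" by (auto simp: U_blocks_def)
qed

lemma measure_U_blocks: "measure cantor_mu U_blocks \<le> 2/3"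
proof -
  have "measure cantor_mu (\<Union>j. zero_block j) \<le> (\<Sum>j. (1/2::real) ^ (2*j+1))"
    by (rule measure_UN_le_suminf[OF finite_measure_cantor_mu sets_zero_block _ geometric_blocks(1)])
       (simp add: zero_block_def measure_agree_on finite_block card_block)
  then show ?thesis unfolding U_blocks_def geometric_blocks(2) .
qed

text \<open>Every point of U is a density point of U: its neighbourhoods end up inside some Z_j.\<close>
lemma U_blocks_subset_Phi: "U_blocks \<subseteq> Phi U_blocks"
proof
  fix x assume "x \<in> U_blocks"
  then obtain j where "x \<in> zero_block j" by (auto simp: U_blocks_def)
  have "cyl (restr x n) \<subseteq> U_blocks" if "(Suc j)^2 \<le> n" for n
    using \<open>x \<in> zero_block j\<close> block_below[of j j] that
    by (fastforce simp: cyl_restr agree_on_def zero_block_def U_blocks_def)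
  then show "x \<in> Phi U_blocks"
    by (intro in_Phi_if_cyl_subset) (auto simp: eventually_sequentially)
qed

lemma U_blocks_relative_measure:
  assumes "x \<notin> U_blocks" and n: "n = (Suc k)^2"
  shows "measure cantor_mu (U_blocks \<inter> cyl (restr x n)) \<le> 2/3 * (1/2)^n"
proof -
  define C where "C j = agree_on {..<n} x \<inter> zero_block j" for j
  have C_sets: "C j \<in> sets cantor_mu" for j
    unfolding C_def by (intro sets.Int sets_agree_on sets_zero_block) simp
  have C_small: "measure cantor_mu (C j) \<le> (1/2)^n * (1/2)^(2*j+1)" for j
  proof (cases "j \<le> k")
    case True
    then have "block j \<subseteq> {..<n}" using block_below n by auto
    then have "x \<in> zero_block j" if "y \<in> C j" for y
      using that by (auto simp: C_def agree_on_def zero_block_def subset_eq)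
    then have "C j = {}"
      using assms(1) by (auto simp: U_blocks_def)
    then show ?thesis by simp
  next
    case False
    then have "n \<le> i" if "i \<in> block j" for i
      using block_above[of k j i] that n by simp
    then have disj: "{..<n} \<inter> block j = {}" by fastforce
    then have "measure cantor_mu (C j) = (1/2) ^ card ({..<n} \<union> block j)"
      by (simp add: C_def zero_block_def agree_on_Un measure_agree_on finite_block)
    also have "card ({..<n} \<union> block j) = n + (2*j+1)"
      using disj by (simp add: card_Un_disjoint finite_block card_block)
    finally show ?thesis by (simp add: power_add)
  qed
  have "U_blocks \<inter> cyl (restr x n) = (\<Union>j. C j)"
    by (auto simp: C_def U_blocks_def cyl_restr)
  also have "measure cantor_mu \<dots> \<le> (\<Sum>j. (1/2)^n * (1/2::real)^(2*j+1))"
    using C_sets C_small summable_mult[OF geometric_blocks(1)]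
    by (rule measure_UN_le_suminf[OF finite_measure_cantor_mu])
  also have "\<dots> = (1/2)^n * (2/3)"
    by (subst suminf_mult[OF geometric_blocks(1)]) (simp only: geometric_blocks(2))
  finally show ?thesis by simp
qed


lemma Phi_U_blocks_subset: "Phi U_blocks \<subseteq> U_blocks"
proof (rule subsetI, rule ccontr)
  fix x assume "x \<in> Phi U_blocks" "x \<notin> U_blocks"
  have "\<exists>n\<ge>N. measure cantor_mu (U_blocks \<inter> cyl (restr x n))
          / measure cantor_mu (cyl (restr x n)) \<le> 2/3" for N
  proof (intro exI conjI)
    show "N \<le> (Suc N)^2" by (simp add: power2_eq_square)
    show "measure cantor_mu (U_blocks \<inter> cyl (restr x ((Suc N)^2)))
          / measure cantor_mu (cyl (restr x ((Suc N)^2))) \<le> 2/3"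
      using U_blocks_relative_measure[OF \<open>x \<notin> U_blocks\<close> refl]
      by (simp add: measure_cyl_restr pos_divide_le_eq)
  qed
  then have "x \<notin> Phi U_blocks"
    by (intro not_in_Phi_if_frequently_le[where c="2/3"]) auto
  then show False using \<open>x \<in> Phi U_blocks\<close> by contradiction
qed

theorem corollary7p2:
  shows "\<exists>U :: (nat \<Rightarrow> bool) set. open U \<and> Phi U = U \<and>
           frontier U \<in> sets cantor_mu \<and> measure cantor_mu (frontier U) > 0"
proof (intro exI conjI)
  interpret prob_space cantor_mu by (rule prob_space_cantor_mu)
  have frontier_eq: "frontier U_blocks = space cantor_mu - U_blocks"
    by (simp add: frontier_def closure_U_blocks interior_open open_U_blocks
        space_cantor_mu Compl_eq_Diff_UNIV)
  show "open U_blocks" by (rule open_U_blocks)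
  show "Phi U_blocks = U_blocks"
    using Phi_U_blocks_subset U_blocks_subset_Phi by (rule subset_antisym)
  show "frontier U_blocks \<in> sets cantor_mu"
    unfolding frontier_eq using sets_U_blocks by auto
  show "measure cantor_mu (frontier U_blocks) > 0"
    unfolding frontier_eq using prob_compl[OF sets_U_blocks] measure_U_blocks by simp
qed

end
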